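(* Let $N\geq 2$ and $k\geq 1$ be integers and let $|\psi_1\rangle,\dots,|\psi_N\rangle$ be linearly independent pure states, each with prior probability $1/N$. For each function $\sigma:\{1,\dots,k\}\to\{1,\dots,N\}$ let $|\psi_\sigma\rangle=|\psi_{\sigma(1)}\rangle\otimes\cdots\otimes|\psi_{\sigma(k)}\rangle$, with prior probability $1/N^k$. Let $p$ be the optimum probability of unambiguous discrimination among the states $|\psi_1\rangle,\dots,|\psi_N\rangle$, and $p_{N,k}$ the optimum probability of unambiguous discrimination among the $N^k$ states $|\psi_\sigma\rangle$. Then $p_{N,k}\geq p^k$.
   Context: Unambiguous discrimination of states $|\chi_1\rangle,\dots,|\chi_M\rangle$ with prior probabilities $\eta_1,\dots,\eta_M$: a POVM $\{E_1,\dots,E_M,E_?\}$ such that $\langle\chi_j|E_i|\chi_j\rangle=0$ for all $i\neq j$, with $E_?$ the inconclusive outcome. Its success probability is $\sum_i\eta_i\langle\chi_i|E_i|\chi_i\rangle$, and the optimum probability of unambiguous discrimination is the supremum of this over all such POVMs. *)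

theory Defs
  imports Complex_Main "HOL-Library.FuncSet"
begin

text \<open>Finite-dimensional Hilbert space with orthonormal basis indexed by a finite set I;
  vectors are functions I -> complex, operators are matrices I x I -> complex.\<close>

definition qform :: "'a set \<Rightarrow> ('a \<Rightarrow> 'a \<Rightarrow> complex) \<Rightarrow> ('a \<Rightarrow> complex) \<Rightarrow> complex" where
  "qform I E v = (\<Sum>i\<in>I. \<Sum>j\<in>I. cnj (v i) * E i j * v j)"

definition psd :: "'a set \<Rightarrow> ('a \<Rightarrow> 'a \<Rightarrow> complex) \<Rightarrow> bool" where
  "psd I E = (\<forall>v. qform I E v \<in> \<real> \<and> 0 \<le> Re (qform I E v))"

definition vnorm2 :: "'a set \<Rightarrow> ('a \<Rightarrow> complex) \<Rightarrow> real" where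
  "vnorm2 I v = (\<Sum>i\<in>I. (cmod (v i))\<^sup>2)"

definition lin_indep :: "'a set \<Rightarrow> 'm set \<Rightarrow> ('m \<Rightarrow> 'a \<Rightarrow> complex) \<Rightarrow> bool" where
  "lin_indep I M chi = (\<forall>c. (\<forall>x\<in>I. (\<Sum>m\<in>M. c m * chi m x) = 0) \<longrightarrow> (\<forall>m\<in>M. c m = 0))"

text \<open>POVM {E_m (m in M), E0} (E0 the inconclusive outcome) unambiguously discriminating chi.\<close>
definition unamb_povm :: "'a set \<Rightarrow> 'm set \<Rightarrow> ('m \<Rightarrow> 'a \<Rightarrow> complex)
    \<Rightarrow> ('m \<Rightarrow> 'a \<Rightarrow> 'a \<Rightarrow> complex) \<Rightarrow> ('a \<Rightarrow> 'a \<Rightarrow> complex) \<Rightarrow> bool" where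
  "unamb_povm I M chi E E0 =
     ((\<forall>m\<in>M. psd I (E m)) \<and> psd I E0 \<and>
      (\<forall>i\<in>I. \<forall>j\<in>I. (\<Sum>m\<in>M. E m i j) + E0 i j = (if i = j then 1 else 0)) \<and>
      (\<forall>m\<in>M. \<forall>m'\<in>M. m \<noteq> m' \<longrightarrow> qform I (E m) (chi m') = 0))"

definition success_prob :: "'a set \<Rightarrow> 'm set \<Rightarrow> ('m \<Rightarrow> real) \<Rightarrow> ('m \<Rightarrow> 'a \<Rightarrow> complex)
    \<Rightarrow> ('m \<Rightarrow> 'a \<Rightarrow> 'a \<Rightarrow> complex) \<Rightarrow> real" where
  "success_prob I M eta chi E = (\<Sum>m\<in>M. eta m * Re (qform I (E m) (chi m)))"

definition opt_unamb :: "'a set \<Rightarrow> 'm set \<Rightarrow> ('m \<Rightarrow> real) \<Rightarrow> ('m \<Rightarrow> 'a \<Rightarrow> complex) \<Rightarrow> real" where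
  "opt_unamb I M eta chi =
     Sup {success_prob I M eta chi E | E. \<exists>E0. unamb_povm I M chi E E0}"

text \<open>k-fold tensor product psi_sigma(1) x ... x psi_sigma(k); basis of the product space
  indexed by functions f : {1..k} -> I (extensional).\<close>
definition tensor_state :: "nat \<Rightarrow> (nat \<Rightarrow> 'a \<Rightarrow> complex) \<Rightarrow> (nat \<Rightarrow> nat) \<Rightarrow> (nat \<Rightarrow> 'a) \<Rightarrow> complex" where
  "tensor_state k psi sigma f = (\<Prod>j\<in>{1..k}. psi (sigma j) (f j))"

end

theory Submission
  imports Defs
begin

text \<open>
  An unambiguous POVM for the single states gives one for the product states by taking tensor
  products: the product outcome \<open>\<sigma>\<close> gets \<open>E\<^bsub>\<sigma>(1)\<^esub> \<otimes> \<dots> \<otimes> E\<^bsub>\<sigma>(k)\<^esub>\<close>, and every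
  product term containing at least one inconclusive factor is inconclusive. Tensor products of
  positive operators are positive (write each factor as a Gram matrix), the expectation value of a
  tensor product operator in a product state factorises, so unambiguity is inherited and the
  success probability with the product prior is the \<open>k\<close>-th power of the single-copy one.
\<close>

section \<open>Positive semidefinite matrices\<close>

lemma qform_restrict_support:
  assumes "finite J" "S \<subseteq> J" "\<forall>x\<in>J - S. v x = 0"
  shows "qform J A v = qform S A v"
proof -
  have "qform J A v = (\<Sum>i\<in>J. \<Sum>j\<in>S. cnj (v i) * A i j * v j)"
    unfolding qform_def
    by (intro sum.cong refl sum.mono_neutral_right) (use assms in auto)
  also have "\<dots> = qform S A v"
    unfolding qform_def by (rule sum.mono_neutral_right) (use assms in auto)
  finally show ?thesis .
qed

lemma qform_cong:
  assumes "\<forall>i\<in>I. \<forall>j\<in>I. A i j = B i j"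
  shows "qform I A v = qform I B v"
  unfolding qform_def using assms by simp

lemma qform_sum:
  "qform I (\<lambda>i j. \<Sum>s\<in>S. B s i j) v = (\<Sum>s\<in>S. qform I (B s) v)"
  unfolding qform_def
  by (simp add: sum_distrib_left sum_distrib_right sum.swap[of _ S])

lemma qform_id:
  assumes "finite I"
  shows "qform I (\<lambda>i j. if i = j then 1 else 0) v = of_real (vnorm2 I v)"
proof -
  have "qform I (\<lambda>i j. if i = j then 1 else 0) v = (\<Sum>i\<in>I. cnj (v i) * v i)"
    unfolding qform_def
    by (intro sum.cong refl) (simp add: if_distrib if_distribR sum.delta' assms cong: if_cong)
  also have "\<dots> = of_real (vnorm2 I v)"
    unfolding vnorm2_def of_real_sum by (simp only: complex_norm_square mult.commute)
  finally show ?thesis .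
qed

lemma psd_zero: "psd I (\<lambda>i j. 0)"
  unfolding psd_def qform_def by simp

lemma psd_id: "finite I \<Longrightarrow> psd I (\<lambda>i j. if i = j then 1 else 0)"
  unfolding psd_def qform_id vnorm2_def by (simp add: sum_nonneg)

lemma psd_sum:
  assumes "\<forall>s\<in>S. psd I (B s)"
  shows "psd I (\<lambda>i j. \<Sum>s\<in>S. B s i j)"
  using assms unfolding psd_def qform_sum by (simp add: sum_in_Reals Re_sum sum_nonneg)

lemma psd_diagonal:
  assumes "psd J A" "finite J" "i \<in> J"
  shows "A i i \<in> \<real> \<and> 0 \<le> Re (A i i)"
proof -
  define v where "v = (\<lambda>x. if x = i then 1 else 0 :: complex)"
  have "qform J A v = qform {i} A v"
    by (rule qform_restrict_support) (use assms in \<open>auto simp: v_def\<close>)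
  also have "\<dots> = A i i" by (simp add: qform_def v_def)
  finally show ?thesis using assms(1) unfolding psd_def by metis
qed

lemma psd_hermitian:
  assumes "psd J A" "finite J" "i \<in> J" "j \<in> J"
  shows "A j i = cnj (A i j)"
proof (cases "i = j")
  case True
  then show ?thesis using psd_diagonal[OF assms(1-3)] by (simp add: Reals_cnj_iff)
next
  case False
  define v1 where "v1 = (\<lambda>x. if x = i then 1 else if x = j then 1 else 0 :: complex)"
  define v2 where "v2 = (\<lambda>x. if x = i then 1 else if x = j then \<i> else 0 :: complex)"
  have "qform J A v1 = qform {i, j} A v1"
    by (rule qform_restrict_support) (use assms in \<open>auto simp: v1_def\<close>)
  also have "\<dots> = A i i + A i j + A j i + A j j"
    using False by (simp add: qform_def v1_def)
  finally have real1: "A i i + A i j + A j i + A j j \<in> \<real>"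
    using assms(1) unfolding psd_def by metis
  have "qform J A v2 = qform {i, j} A v2"
    by (rule qform_restrict_support) (use assms in \<open>auto simp: v2_def\<close>)
  also have "\<dots> = A i i + \<i> * A i j - \<i> * A j i + A j j"
  proof -
    have "\<And>x. - (\<i> * x * \<i>) = x" by (simp add: complex_eq_iff)
    then show ?thesis using False by (simp add: qform_def v2_def)
  qed
  finally have real2: "A i i + \<i> * A i j - \<i> * A j i + A j j \<in> \<real>"
    using assms(1) unfolding psd_def by metis
  have "A i i \<in> \<real>" "A j j \<in> \<real>"
    using psd_diagonal[OF assms(1,2,3)] psd_diagonal[OF assms(1,2,4)] by auto
  with real1 real2 have "Im (A i j) + Im (A j i) = 0" "Re (A i j) - Re (A j i) = 0"
    by (simp_all add: complex_is_Real_iff)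
  then show ?thesis by (simp add: complex_eq_iff)
qed

lemma psd_zero_diagonal_row:
  assumes "psd J A" "finite J" "a \<in> J" "j \<in> J" "A a a = 0"
  shows "A a j = 0"
proof (rule ccontr)
  assume "A a j \<noteq> 0"
  define z where "z = A a j"
  define s where "s = (Re (A j j) + 1) / (2 * (cmod z)\<^sup>2)"
  define v where "v = (\<lambda>x. if x = a then - of_real s * z else if x = j then 1 else 0 :: complex)"
  have "j \<noteq> a" using \<open>A a j \<noteq> 0\<close> assms(5) by auto
  have z_pos: "(cmod z)\<^sup>2 > 0" using \<open>A a j \<noteq> 0\<close> z_def by simp
  have zz: "cnj z * z = of_real ((cmod z)\<^sup>2)" by (simp only: complex_norm_square mult.commute)
  have "A j a = cnj z" unfolding z_def by (rule psd_hermitian[OF assms(1-4)])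
  then have "qform J A v = - of_real s * (cnj z * z) - of_real s * (cnj z * z) + A j j"
    using \<open>j \<noteq> a\<close> assms(2-5)
    by (subst qform_restrict_support[of J "{a, j}"]) (auto simp: qform_def v_def z_def)
  also have "\<dots> = - (of_real (Re (A j j) + 1)) + A j j"
    unfolding zz s_def using z_pos by (simp add: field_simps)
  finally have "Re (qform J A v) = -1" by simp
  then show False using assms(1) unfolding psd_def by (metis neg_0_le_iff_le not_one_le_zero)
qed

lemma psd_schur_complement:
  assumes P: "psd (insert a I) A" and fin: "finite I" and a: "a \<notin> I"
  shows "psd I (\<lambda>i j. A i j - A i a * A a j / A a a)"
  unfolding psd_def
proof
  fix v
  define \<alpha> where "\<alpha> = A a a"
  define s where "s = (\<Sum>j\<in>I. A a j * v j)"
  define t where "t = (\<Sum>i\<in>I. cnj (v i) * A i a)"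
  define c where "c = - s / \<alpha>"
  define v' where "v' = (\<lambda>x. if x = a then c else v x)"
  define Q where "Q = (\<Sum>i\<in>I. \<Sum>j\<in>I. cnj (v i) * A i j * v j)"
  have \<alpha>_real: "cnj \<alpha> = \<alpha>"
    using psd_diagonal[OF P] fin unfolding \<alpha>_def by (simp add: Reals_cnj_iff)
  have v'_I: "\<And>x. x \<in> I \<Longrightarrow> v' x = v x" and v'_a: "v' a = c"
    using a unfolding v'_def by auto
  have inner: "\<And>i. (\<Sum>j\<in>insert a I. cnj (v' i) * A i j * v' j)
      = cnj (v' i) * A i a * c + (\<Sum>j\<in>I. cnj (v' i) * A i j * v j)"
    using fin a v'_I v'_a by simp
  have "qform (insert a I) A v' = cnj c * \<alpha> * c + (\<Sum>j\<in>I. cnj c * A a j * v j)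
      + (\<Sum>i\<in>I. cnj (v i) * A i a * c + (\<Sum>j\<in>I. cnj (v i) * A i j * v j))"
    unfolding qform_def inner using fin a v'_I v'_a by (simp add: \<alpha>_def)
  also have "\<dots> = cnj c * \<alpha> * c + cnj c * s + t * c + Q"
    unfolding s_def t_def Q_def
    by (simp add: sum.distrib sum_distrib_left sum_distrib_right mult.assoc)
  also have "cnj c * \<alpha> * c + cnj c * s + t * c = - (t * s / \<alpha>)"
  proof (cases "\<alpha> = 0")
    case False
    have "cnj c = - cnj s / \<alpha>" unfolding c_def using \<alpha>_real by simp
    then show ?thesis unfolding c_def using False by (simp add: field_simps)
  qed (simp add: c_def)
  also have "- (t * s / \<alpha>) + Q = Q - (\<Sum>i\<in>I. \<Sum>j\<in>I. cnj (v i) * A i a * (A a j * v j)) / \<alpha>"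
    unfolding t_def s_def by (simp add: sum_product)
  also have "\<dots> = qform I (\<lambda>i j. A i j - A i a * A a j / A a a) v"
    unfolding qform_def Q_def \<alpha>_def
    by (simp add: sum_subtractf sum_divide_distrib ring_distribs mult.assoc)
  finally show "qform I (\<lambda>i j. A i j - A i a * A a j / A a a) v \<in> \<real> \<and>
      0 \<le> Re (qform I (\<lambda>i j. A i j - A i a * A a j / A a a) v)"
    using P unfolding psd_def by metis
qed

lemma psd_gram:
  assumes "finite I" "\<forall>i\<in>I. \<forall>j\<in>I. A i j = (\<Sum>r\<in>R. w r i * cnj (w r j))"
  shows "psd I A"
  unfolding psd_def
proof
  fix v
  define z where "z = (\<lambda>r. \<Sum>i\<in>I. cnj (v i) * w r i)"
  have "qform I A v = (\<Sum>i\<in>I. \<Sum>j\<in>I. \<Sum>r\<in>R. cnj (v i) * w r i * (cnj (w r j) * v j))"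
    unfolding qform_def using assms(2)
    by (intro sum.cong refl) (simp add: sum_distrib_left sum_distrib_right algebra_simps)
  also have "\<dots> = (\<Sum>r\<in>R. \<Sum>i\<in>I. \<Sum>j\<in>I. cnj (v i) * w r i * (cnj (w r j) * v j))"
    by (subst sum.swap, rule sum.cong[OF refl], rule sum.swap)
  also have "\<dots> = (\<Sum>r\<in>R. z r * cnj (z r))"
    unfolding z_def cnj_sum sum_product by (simp add: ac_simps)
  also have "\<dots> = of_real (\<Sum>r\<in>R. (cmod (z r))\<^sup>2)"
    by (simp only: of_real_sum complex_norm_square)
  finally show "qform I A v \<in> \<real> \<and> 0 \<le> Re (qform I A v)"
    by (simp add: sum_nonneg)
qed

text \<open>
  Cholesky factorisation: the row \<open>w\<^bsub>a\<^esub> = A(-,a) / \<surd>A\<^bsub>aa\<^esub>\<close> accounts for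
  \<open>A(-,a) A(a,-) / A\<^bsub>aa\<^esub>\<close>, and the rest is the Schur complement, handled by induction.
  A zero pivot forces a zero row, so then \<open>w\<^bsub>a\<^esub> = 0\<close> (as \<open>x / 0 = 0\<close>) is right too.
\<close>
lemma psd_imp_gram:
  assumes "finite I" "psd I A"
  shows "\<exists>w. \<forall>i\<in>I. \<forall>j\<in>I. A i j = (\<Sum>r\<in>I. w r i * cnj (w r j))"
  using assms
proof (induction I arbitrary: A rule: finite_induct)
  case empty
  show ?case by simp
next
  case (insert a I)
  define \<alpha> where "\<alpha> = A a a"
  have P: "psd (insert a I) A" and fin: "finite (insert a I)" and aI: "a \<in> insert a I"
    using insert by simp_all
  have "\<alpha> \<in> \<real>" "0 \<le> Re \<alpha>" using psd_diagonal[OF P fin aI] unfolding \<alpha>_def by auto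
  then have sqrt_sq: "of_real (sqrt (Re \<alpha>)) * of_real (sqrt (Re \<alpha>)) = \<alpha>"
    by (simp flip: of_real_mult add: complex_is_Real_iff complex_eq_iff)
  have herm: "\<And>i j. i \<in> insert a I \<Longrightarrow> j \<in> insert a I \<Longrightarrow> A j i = cnj (A i j)"
    by (rule psd_hermitian[OF P fin])
  obtain w' where w': "\<forall>i\<in>I. \<forall>j\<in>I. A i j - A i a * A a j / \<alpha> = (\<Sum>r\<in>I. w' r i * cnj (w' r j))"
    using insert.IH[OF psd_schur_complement[OF P insert(1,2)]] unfolding \<alpha>_def by blast
  define w where
    "w = (\<lambda>r x. if r = a then A x a / of_real (sqrt (Re \<alpha>)) else if x = a then 0 else w' r x)"
  have pivot_row: "w a x * cnj (w a y) = A x a * A a y / \<alpha>"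
    if "y \<in> insert a I" for x y
  proof -
    have "w a x * cnj (w a y) = A x a * cnj (A y a) / (of_real (sqrt (Re \<alpha>)) * of_real (sqrt (Re \<alpha>)))"
      unfolding w_def by simp
    then show ?thesis unfolding sqrt_sq using herm[OF aI that] by simp
  qed
  have other_rows: "(\<Sum>r\<in>I. w r x * cnj (w r y))
      = (if x = a \<or> y = a then 0 else A x y - A x a * A a y / \<alpha>)"
    if "x \<in> insert a I" "y \<in> insert a I" for x y
  proof (cases "x = a \<or> y = a")
    case True
    then show ?thesis using insert(2) unfolding w_def by (auto intro: sum.neutral)
  next
    case False
    then have "x \<in> I" "y \<in> I" using that by auto
    then have "(\<Sum>r\<in>I. w r x * cnj (w r y)) = (\<Sum>r\<in>I. w' r x * cnj (w' r y))"
      using False insert(2) unfolding w_def by (intro sum.cong) auto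
    then show ?thesis using w' \<open>x \<in> I\<close> \<open>y \<in> I\<close> False by simp
  qed
  show ?case
  proof (intro exI ballI)
    fix i j assume i: "i \<in> insert a I" and j: "j \<in> insert a I"
    have "(\<Sum>r\<in>insert a I. w r i * cnj (w r j))
        = A i a * A a j / \<alpha> + (if i = a \<or> j = a then 0 else A i j - A i a * A a j / \<alpha>)"
      using insert(1,2) pivot_row[OF j] other_rows[OF i j] by simp
    also have "\<dots> = A i j"
    proof (cases "\<alpha> = 0")
      case True
      have "A a j = 0" "A i a = 0"
        using psd_zero_diagonal_row[OF P fin aI j] psd_zero_diagonal_row[OF P fin aI i]
          True herm[OF aI i] unfolding \<alpha>_def by simp_all
      then show ?thesis using True by (cases "i = a"; cases "j = a"; simp)
    next
      case False
      then show ?thesis unfolding \<alpha>_def by (cases "i = a"; cases "j = a"; simp)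
    qed
    finally show "A i j = (\<Sum>r\<in>insert a I. w r i * cnj (w r j))" by simp
  qed
qed

section \<open>Tensor products\<close>

definition tensor_vec :: "'k set \<Rightarrow> ('k \<Rightarrow> 'a \<Rightarrow> complex) \<Rightarrow> ('k \<Rightarrow> 'a) \<Rightarrow> complex" where
  "tensor_vec K u = (\<lambda>f. \<Prod>j\<in>K. u j (f j))"

definition tensor_op ::
    "'k set \<Rightarrow> ('k \<Rightarrow> 'a \<Rightarrow> 'a \<Rightarrow> complex) \<Rightarrow> ('k \<Rightarrow> 'a) \<Rightarrow> ('k \<Rightarrow> 'a) \<Rightarrow> complex" where
  "tensor_op K A = (\<lambda>f g. \<Prod>j\<in>K. A j (f j) (g j))"

lemma tensor_state_eq_tensor_vec:
  "tensor_state k psi \<sigma> = tensor_vec {1..k} (\<lambda>j. psi (\<sigma> j))"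
  unfolding tensor_state_def tensor_vec_def ..

lemma qform_tensor:
  assumes "finite K" "finite I"
  shows "qform (PiE K (\<lambda>_. I)) (tensor_op K A) (tensor_vec K u) = (\<Prod>j\<in>K. qform I (A j) (u j))"
proof -
  have "(\<Prod>j\<in>K. qform I (A j) (u j))
      = (\<Sum>f\<in>PiE K (\<lambda>_. I). \<Prod>j\<in>K. \<Sum>y\<in>I. cnj (u j (f j)) * A j (f j) y * u j y)"
    unfolding qform_def by (rule prod_sum_PiE) (use assms in auto)
  also have "\<dots> = (\<Sum>f\<in>PiE K (\<lambda>_. I). \<Sum>g\<in>PiE K (\<lambda>_. I).
      \<Prod>j\<in>K. cnj (u j (f j)) * A j (f j) (g j) * u j (g j))"
    by (intro sum.cong refl prod_sum_PiE) (use assms in auto)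
  finally show ?thesis
    unfolding qform_def tensor_op_def tensor_vec_def by (simp add: prod.distrib)
qed

lemma psd_tensor:
  assumes "finite K" "finite I" "\<forall>j\<in>K. psd I (A j)"
  shows "psd (PiE K (\<lambda>_. I)) (tensor_op K A)"
proof -
  have "\<forall>j\<in>K. \<exists>w. \<forall>x\<in>I. \<forall>y\<in>I. A j x y = (\<Sum>r\<in>I. w r x * cnj (w r y))"
    using psd_imp_gram[OF assms(2)] assms(3) by blast
  then obtain W where W: "\<forall>j\<in>K. \<forall>x\<in>I. \<forall>y\<in>I. A j x y = (\<Sum>r\<in>I. W j r x * cnj (W j r y))"
    by (rule bchoice[THEN exE])
  show ?thesis
  proof (rule psd_gram[where R = "PiE K (\<lambda>_. I)" and w = "\<lambda>\<rho>. tensor_vec K (\<lambda>j. W j (\<rho> j))"])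
    show "finite (PiE K (\<lambda>_. I))" using assms by (simp add: finite_PiE)
    show "\<forall>f\<in>PiE K (\<lambda>_. I). \<forall>g\<in>PiE K (\<lambda>_. I). tensor_op K A f g = (\<Sum>\<rho>\<in>PiE K (\<lambda>_. I).
        tensor_vec K (\<lambda>j. W j (\<rho> j)) f * cnj (tensor_vec K (\<lambda>j. W j (\<rho> j)) g))"
    proof (intro ballI)
      fix f g assume "f \<in> PiE K (\<lambda>_. I)" "g \<in> PiE K (\<lambda>_. I)"
      then have "tensor_op K A f g = (\<Prod>j\<in>K. \<Sum>r\<in>I. W j r (f j) * cnj (W j r (g j)))"
        unfolding tensor_op_def using W by (intro prod.cong refl) (auto simp: PiE_iff)
      also have "\<dots> = (\<Sum>\<rho>\<in>PiE K (\<lambda>_. I). \<Prod>j\<in>K. W j (\<rho> j) (f j) * cnj (W j (\<rho> j) (g j)))"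
        by (rule prod_sum_PiE) (use assms in auto)
      finally show "tensor_op K A f g = (\<Sum>\<rho>\<in>PiE K (\<lambda>_. I).
          tensor_vec K (\<lambda>j. W j (\<rho> j)) f * cnj (tensor_vec K (\<lambda>j. W j (\<rho> j)) g))"
        unfolding tensor_vec_def by (simp add: prod.distrib)
    qed
  qed
qed

lemma tensor_op_id:
  assumes "finite K" "f \<in> PiE K (\<lambda>_. I)" "g \<in> PiE K (\<lambda>_. I)"
  shows "tensor_op K (\<lambda>_ x y. if x = y then 1 else 0) f g = (if f = g then 1 else 0)"
proof (cases "f = g")
  case False
  then obtain j where "j \<in> K" "f j \<noteq> g j" using PiE_ext[OF assms(2,3)] by blast
  then show ?thesis unfolding tensor_op_def using False assms(1) by (simp add: prod_zero_iff) blast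
qed (simp add: tensor_op_def)

section \<open>Unambiguous discrimination\<close>

lemma unamb_povm_qform_le:
  assumes U: "unamb_povm I M chi E E0" and "m \<in> M" "finite M" "finite I"
  shows "Re (qform I (E m) v) \<le> vnorm2 I v"
proof -
  have "qform I (\<lambda>i j. (\<Sum>m\<in>M. E m i j) + E0 i j) v = qform I (\<lambda>i j. if i = j then 1 else 0) v"
    by (rule qform_cong) (use U in \<open>simp add: unamb_povm_def\<close>)
  moreover have "qform I (\<lambda>i j. (\<Sum>m\<in>M. E m i j) + E0 i j) v
      = (\<Sum>m\<in>M. qform I (E m) v) + qform I E0 v"
    unfolding qform_sum[symmetric] unfolding qform_def by (simp add: ring_distribs sum.distrib)
  ultimately have sum_eq: "(\<Sum>m\<in>M. Re (qform I (E m) v)) + Re (qform I E0 v) = vnorm2 I v"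
    unfolding qform_id[OF \<open>finite I\<close>] by (metis Re_sum plus_complex.sel(1) Re_complex_of_real)
  have nonneg: "\<forall>m\<in>M. 0 \<le> Re (qform I (E m) v)" "0 \<le> Re (qform I E0 v)"
    using U unfolding unamb_povm_def psd_def by auto
  have "Re (qform I (E m) v) \<le> (\<Sum>m\<in>M. Re (qform I (E m) v))"
    by (rule member_le_sum) (use nonneg assms in auto)
  then show ?thesis using sum_eq nonneg by linarith
qed

lemma success_prob_nonneg:
  assumes "unamb_povm I M chi E E0" "\<forall>m\<in>M. 0 \<le> eta m"
  shows "0 \<le> success_prob I M eta chi E"
  using assms unfolding success_prob_def unamb_povm_def psd_def by (simp add: sum_nonneg)

lemma success_prob_le:
  assumes "unamb_povm I M chi E E0" "finite M" "finite I" "\<forall>m\<in>M. 0 \<le> eta m"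
  shows "success_prob I M eta chi E \<le> (\<Sum>m\<in>M. eta m * vnorm2 I (chi m))"
  unfolding success_prob_def
  by (intro sum_mono mult_left_mono) (use unamb_povm_qform_le[OF assms(1) _ assms(2,3)] assms(4) in auto)

lemma bdd_above_success_probs:
  assumes "finite M" "finite I" "\<forall>m\<in>M. 0 \<le> eta m"
  shows "bdd_above {success_prob I M eta chi E | E. \<exists>E0. unamb_povm I M chi E E0}"
  by (rule bdd_aboveI[where M = "\<Sum>m\<in>M. eta m * vnorm2 I (chi m)"])
    (auto intro: success_prob_le[OF _ assms])

lemma unamb_povm_always_inconclusive:
  "finite I \<Longrightarrow> unamb_povm I M chi (\<lambda>_ _ _. 0) (\<lambda>i j. if i = j then 1 else 0)"
  unfolding unamb_povm_def by (simp add: psd_zero psd_id qform_def)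

text \<open>
  The label \<open>z \<notin> M\<close> stands for the inconclusive outcome, so that \<open>E'\<close> is the whole
  single-copy POVM. Completeness of the product POVM is completeness of \<open>E'\<close> in each factor.
\<close>
lemma unamb_povm_tensor:
  assumes U: "unamb_povm I M chi E E0" and "finite I" "finite M" "finite K" "z \<notin> M"
  defines "E' \<equiv> E(z := E0)"
  shows "unamb_povm (PiE K (\<lambda>_. I)) (PiE K (\<lambda>_. M)) (\<lambda>\<sigma>. tensor_vec K (\<lambda>j. chi (\<sigma> j)))
      (\<lambda>\<sigma>. tensor_op K (\<lambda>j. E (\<sigma> j)))
      (\<lambda>f g. \<Sum>\<tau>\<in>PiE K (\<lambda>_. insert z M) - PiE K (\<lambda>_. M). tensor_op K (\<lambda>j. E' (\<tau> j)) f g)"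
    (is "unamb_povm ?I ?M _ _ _")
proof -
  let ?T = "PiE K (\<lambda>_. insert z M)"
  have psd_E: "\<forall>m\<in>M. psd I (E m)" and psd_E': "\<forall>m\<in>insert z M. psd I (E' m)"
    and unamb: "\<forall>m\<in>M. \<forall>m'\<in>M. m \<noteq> m' \<longrightarrow> qform I (E m) (chi m') = 0"
    using U \<open>z \<notin> M\<close> unfolding unamb_povm_def E'_def by auto
  have "(\<Sum>m\<in>insert z M. E' m i j) = E0 i j + (\<Sum>m\<in>M. E m i j)" for i j
    using \<open>z \<notin> M\<close> \<open>finite M\<close> unfolding E'_def by (auto intro!: sum.cong)
  then have complete: "\<forall>i\<in>I. \<forall>j\<in>I. (\<Sum>m\<in>insert z M. E' m i j) = (if i = j then 1 else 0)"
    using U unfolding unamb_povm_def by (simp add: add.commute)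
  have E_eq_E': "tensor_op K (\<lambda>j. E (\<sigma> j)) = tensor_op K (\<lambda>j. E' (\<sigma> j))" if "\<sigma> \<in> ?M" for \<sigma>
    using that \<open>z \<notin> M\<close> unfolding tensor_op_def E'_def
    by (intro ext prod.cong refl) (auto simp: PiE_iff)
  have "(\<Sum>\<sigma>\<in>?M. tensor_op K (\<lambda>j. E (\<sigma> j)) f g)
      + (\<Sum>\<tau>\<in>?T - ?M. tensor_op K (\<lambda>j. E' (\<tau> j)) f g) = (if f = g then 1 else 0)"
    if "f \<in> ?I" "g \<in> ?I" for f g
  proof -
    have "?M \<subseteq> ?T" by (auto simp: PiE_iff)
    then have "(\<Sum>\<sigma>\<in>?M. tensor_op K (\<lambda>j. E (\<sigma> j)) f g)
        + (\<Sum>\<tau>\<in>?T - ?M. tensor_op K (\<lambda>j. E' (\<tau> j)) f g)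
        = (\<Sum>\<tau>\<in>?T. tensor_op K (\<lambda>j. E' (\<tau> j)) f g)"
      using E_eq_E' sum.subset_diff[of ?M ?T "\<lambda>\<tau>. tensor_op K (\<lambda>j. E' (\<tau> j)) f g"] assms(3,4) by (simp add: finite_PiE add.commute)
    also have "\<dots> = (\<Prod>j\<in>K. \<Sum>m\<in>insert z M. E' m (f j) (g j))"
      unfolding tensor_op_def by (rule prod_sum_PiE[symmetric]) (use assms in auto)
    also have "\<dots> = tensor_op K (\<lambda>_ x y. if x = y then 1 else 0) f g"
      unfolding tensor_op_def using complete that by (intro prod.cong refl) (auto simp: PiE_iff)
    finally show ?thesis using tensor_op_id[OF \<open>finite K\<close> that] by simp
  qed
  moreover have "qform ?I (tensor_op K (\<lambda>j. E (\<sigma> j))) (tensor_vec K (\<lambda>j. chi (\<sigma>' j))) = 0"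
    if \<sigma>: "\<sigma> \<in> ?M" "\<sigma>' \<in> ?M" and "\<sigma> \<noteq> \<sigma>'" for \<sigma> \<sigma>'
  proof -
    obtain j where "j \<in> K" "\<sigma> j \<noteq> \<sigma>' j" using PiE_ext[OF \<sigma>] \<open>\<sigma> \<noteq> \<sigma>'\<close> by blast
    then have "qform I (E (\<sigma> j)) (chi (\<sigma>' j)) = 0" using unamb \<sigma> by blast
    then show ?thesis
      using \<open>j \<in> K\<close> assms(2,4) by (simp add: qform_tensor prod_zero_iff) blast
  qed
  moreover have "psd ?I (\<lambda>f g. \<Sum>\<tau>\<in>?T - ?M. tensor_op K (\<lambda>j. E' (\<tau> j)) f g)"
    using psd_E' assms(2,4) by (intro psd_sum ballI psd_tensor) (auto simp: PiE_iff)
  moreover have "\<forall>\<sigma>\<in>?M. psd ?I (tensor_op K (\<lambda>j. E (\<sigma> j)))"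
    using psd_E assms(2,4) by (intro ballI psd_tensor) (auto simp: PiE_iff)
  ultimately show ?thesis unfolding unamb_povm_def by blast
qed

lemma Re_prod_Reals:
  assumes "\<forall>j\<in>K. z j \<in> \<real>"
  shows "Re (\<Prod>j\<in>K. z j) = (\<Prod>j\<in>K. Re (z j))"
proof -
  have "(\<Prod>j\<in>K. z j) = (\<Prod>j\<in>K. of_real (Re (z j)))"
    using assms by (intro prod.cong refl) (simp add: complex_is_Real_iff complex_eq_iff)
  then show ?thesis by (metis Re_complex_of_real of_real_prod)
qed

lemma success_prob_tensor:
  assumes U: "unamb_povm I M chi E E0" and "finite I" "finite M" "finite K"
  shows "success_prob (PiE K (\<lambda>_. I)) (PiE K (\<lambda>_. M)) (\<lambda>\<sigma>. \<Prod>j\<in>K. eta (\<sigma> j))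
      (\<lambda>\<sigma>. tensor_vec K (\<lambda>j. chi (\<sigma> j))) (\<lambda>\<sigma>. tensor_op K (\<lambda>j. E (\<sigma> j)))
    = success_prob I M eta chi E ^ card K"
proof -
  define q where "q = (\<lambda>m. qform I (E m) (chi m))"
  have q_real: "\<forall>m\<in>M. q m \<in> \<real>" using U unfolding unamb_povm_def psd_def q_def by auto
  have "success_prob (PiE K (\<lambda>_. I)) (PiE K (\<lambda>_. M)) (\<lambda>\<sigma>. \<Prod>j\<in>K. eta (\<sigma> j))
      (\<lambda>\<sigma>. tensor_vec K (\<lambda>j. chi (\<sigma> j))) (\<lambda>\<sigma>. tensor_op K (\<lambda>j. E (\<sigma> j)))
      = (\<Sum>\<sigma>\<in>PiE K (\<lambda>_. M). \<Prod>j\<in>K. eta (\<sigma> j) * Re (q (\<sigma> j)))"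
    unfolding success_prob_def using q_real assms(2,4)
    by (intro sum.cong refl) (auto simp: qform_tensor q_def Re_prod_Reals prod.distrib PiE_iff)
  also have "\<dots> = (\<Prod>j\<in>K. \<Sum>m\<in>M. eta m * Re (q m))"
    by (rule prod_sum_PiE[symmetric]) (use assms in auto)
  finally show ?thesis unfolding success_prob_def q_def by simp
qed

lemma Sup_power_le:
  fixes S T :: "real set"
  assumes "S \<noteq> {}" "\<forall>s\<in>S. 0 \<le> s \<and> s ^ n \<in> T" "bdd_above T" "n > 0"
  shows "Sup S ^ n \<le> Sup T"
proof -
  have le_root: "s \<le> root n (Sup T)" if "s \<in> S" for s
  proof -
    have "s ^ n \<le> Sup T" using assms(2,3) that by (simp add: cSup_upper)
    then show ?thesis
      using assms(2,4) that by (metis real_root_le_mono real_root_power_cancel)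
  qed
  obtain s where "s \<in> S" using assms(1) by blast
  then have "0 \<le> Sup T"
    using assms(2,3) by (meson cSup_upper order.trans zero_le_power)
  have "Sup S \<le> root n (Sup T)" using assms(1) le_root by (rule cSup_least)
  moreover have "0 \<le> Sup S"
    using \<open>s \<in> S\<close> assms(2) le_root by (meson bdd_aboveI cSup_upper order.trans)
  ultimately have "Sup S ^ n \<le> root n (Sup T) ^ n" by (rule power_mono)
  also have "\<dots> = Sup T" using \<open>n > 0\<close> \<open>0 \<le> Sup T\<close> by (simp add: real_root_pow_pos2)
  finally show ?thesis .
qed

theorem lemma1:
  fixes N k :: nat and psi :: "nat \<Rightarrow> 'i::finite \<Rightarrow> complex"
  assumes "N \<ge> 2" and "k \<ge> 1"
    and "\<forall>n\<in>{1..N}. vnorm2 UNIV (psi n) = 1"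
    and "lin_indep UNIV {1..N} psi"
  shows "opt_unamb (PiE {1..k} (\<lambda>_. (UNIV :: 'i set))) (PiE {1..k} (\<lambda>_. {1..N}))
           (\<lambda>_. 1 / real N ^ k) (tensor_state k psi)
         \<ge> (opt_unamb UNIV {1..N} (\<lambda>_. 1 / real N) psi) ^ k"
proof -
  let ?I = "PiE {1..k} (\<lambda>_. (UNIV :: 'i set))" and ?M = "PiE {1..k} (\<lambda>_. {1..N})"
  define S where "S = {success_prob UNIV {1..N} (\<lambda>_. 1 / real N) psi E | E.
    \<exists>E0. unamb_povm UNIV {1..N} psi E E0}"
  define T where "T = {success_prob ?I ?M (\<lambda>_. 1 / real N ^ k) (tensor_state k psi) E | E.
    \<exists>E0. unamb_povm ?I ?M (tensor_state k psi) E E0}"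
  have product_prior: "(\<lambda>_. 1 / real N ^ k) = (\<lambda>\<sigma>. \<Prod>j\<in>{1..k}. 1 / real N)"
    by (simp add: power_one_over)
  have product_states: "tensor_state k psi = (\<lambda>\<sigma>. tensor_vec {1..k} (\<lambda>j. psi (\<sigma> j)))"
    by (rule ext) (rule tensor_state_eq_tensor_vec)
  have "0 \<le> s \<and> s ^ k \<in> T" if "s \<in> S" for s
  proof -
    obtain E E0 where U: "unamb_povm UNIV {1..N} psi E E0"
      and s: "s = success_prob UNIV {1..N} (\<lambda>_. 1 / real N) psi E"
      using \<open>s \<in> S\<close> unfolding S_def by blast
    have "s ^ k = success_prob ?I ?M (\<lambda>_. 1 / real N ^ k) (tensor_state k psi)
        (\<lambda>\<sigma>. tensor_op {1..k} (\<lambda>j. E (\<sigma> j)))"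
      unfolding s product_prior product_states
      using success_prob_tensor[OF U, of "{1..k}" "\<lambda>_. 1 / real N"] by simp
    then show ?thesis
      using success_prob_nonneg[OF U] unamb_povm_tensor[OF U, of "{1..k}" 0]
      unfolding s T_def product_states by auto
  qed
  moreover have "S \<noteq> {}"
    using unamb_povm_always_inconclusive[of UNIV "{1..N}" psi] unfolding S_def by auto
  moreover have "bdd_above T"
    unfolding T_def by (rule bdd_above_success_probs) (auto simp: finite_PiE)
  ultimately have "Sup S ^ k \<le> Sup T" using \<open>k \<ge> 1\<close> by (intro Sup_power_le) auto
  then show ?thesis unfolding opt_unamb_def S_def T_def .
qed

end
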